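(* For $k\ge 0$ let $B_k$ denote the family of bar $k$-visibility graphs. Then for all $i,j\ge 0$ with $i\ne j$, $B_i\not\subseteq B_j$ and $B_j\not\subseteq B_i$.
   Context: A bar $k$-visibility representation is a finite collection of pairwise disjoint closed horizontal line segments (bars) in the plane; two bars are joined by a line of sight if there is a vertical segment with endpoints on the two bars intersecting at most $k$ other bars. The bar $k$-visibility graph has one vertex per bar, two vertices adjacent iff their bars are joined by a line of sight. *)

theory Defs
  imports Main "HOL.Real"
begin

text \<open>A bar is a closed horizontal segment {(x, y) | l <= x <= r} with l < r,
  encoded as the triple (y, l, r).\<close>
type_synonym bar = "real \<times> real \<times> real"

definition bar_y :: "bar \<Rightarrow> real" where "bar_y b = fst b"
definition bar_l :: "bar \<Rightarrow> real" where "bar_l b = fst (snd b)"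
definition bar_r :: "bar \<Rightarrow> real" where "bar_r b = snd (snd b)"

definition bar_rep :: "'a set \<Rightarrow> ('a \<Rightarrow> bar) \<Rightarrow> bool" where
  "bar_rep V B \<longleftrightarrow> finite V \<and>
     (\<forall>v\<in>V. bar_l (B v) < bar_r (B v)) \<and>
     (\<forall>u\<in>V. \<forall>v\<in>V. u \<noteq> v \<longrightarrow>
        bar_y (B u) \<noteq> bar_y (B v) \<or> bar_r (B u) < bar_l (B v) \<or> bar_r (B v) < bar_l (B u))"

definition bars_crossed :: "'a set \<Rightarrow> ('a \<Rightarrow> bar) \<Rightarrow> 'a \<Rightarrow> 'a \<Rightarrow> real \<Rightarrow> nat" where
  "bars_crossed V B u v x = card {w \<in> V - {u, v}.
      bar_l (B w) \<le> x \<and> x \<le> bar_r (B w) \<and>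
      min (bar_y (B u)) (bar_y (B v)) \<le> bar_y (B w) \<and>
      bar_y (B w) \<le> max (bar_y (B u)) (bar_y (B v))}"

definition k_sees :: "nat \<Rightarrow> 'a set \<Rightarrow> ('a \<Rightarrow> bar) \<Rightarrow> 'a \<Rightarrow> 'a \<Rightarrow> bool" where
  "k_sees k V B u v \<longleftrightarrow> (\<exists>x.
      bar_l (B u) \<le> x \<and> x \<le> bar_r (B u) \<and>
      bar_l (B v) \<le> x \<and> x \<le> bar_r (B v) \<and>
      bars_crossed V B u v x \<le> k)"

text \<open>The (simple) graph (V, E) is a bar k-visibility graph (up to isomorphism: vertices are
  abstract labels of the bars).\<close>
definition bar_k_visibility_graph :: "nat \<Rightarrow> 'a set \<Rightarrow> ('a \<Rightarrow> 'a \<Rightarrow> bool) \<Rightarrow> bool" where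
  "bar_k_visibility_graph k V E \<longleftrightarrow>
     (\<exists>B. bar_rep V B \<and>
        (\<forall>u v. E u v \<longleftrightarrow> (u \<in> V \<and> v \<in> V \<and> u \<noteq> v \<and> k_sees k V B u v)))"

end

theory Submission
  imports Defs
begin

text \<open>For \<open>i < j\<close> two graphs separate the classes. A 4-cycle whose two diagonals are each
  blocked by \<open>i + 1\<close> bars is a bar \<open>i\<close>-visibility graph, but not a bar \<open>j\<close>-visibility graph:
  there a blocked line of sight would pass through \<open>j + 1\<close> pairwise visible bars, i.e. a
  clique that the graph does not have, so the bars of both diagonals would have disjoint
  \<open>x\<close>-ranges, which is impossible for a 4-cycle of intervals. Conversely, the complete graph on
  \<open>4 j + 4\<close> vertices is a bar \<open>j\<close>-visibility graph, but no complete graph on \<open>n \<ge> 4 i + 6\<close>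
  vertices is a bar \<open>i\<close>-visibility graph: pairwise visible bars share a point, and pairing
  the \<open>t\<close>-th bar from below with the \<open>(t + 2 i + 3)\<close>-th yields \<open>2 i + 3\<close> nested pairs, of
  which \<open>i + 2\<close> have their sight lines on one side of that point; the innermost of these
  crosses \<open>i + 1\<close> bars.\<close>

abbreviation covers :: "('a \<Rightarrow> bar) \<Rightarrow> 'a \<Rightarrow> real \<Rightarrow> bool" where
  "covers B v x \<equiv> bar_l (B v) \<le> x \<and> x \<le> bar_r (B v)"

definition crossed_bars :: "'a set \<Rightarrow> ('a \<Rightarrow> bar) \<Rightarrow> 'a \<Rightarrow> 'a \<Rightarrow> real \<Rightarrow> 'a set" where
  "crossed_bars V B u v x = {w \<in> V - {u, v}. covers B w x \<and>
      min (bar_y (B u)) (bar_y (B v)) \<le> bar_y (B w) \<and> bar_y (B w) \<le> max (bar_y (B u)) (bar_y (B v))}"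

definition clique :: "('a \<Rightarrow> 'a \<Rightarrow> bool) \<Rightarrow> 'a set \<Rightarrow> bool" where
  "clique E T \<longleftrightarrow> (\<forall>s\<in>T. \<forall>t\<in>T. s \<noteq> t \<longrightarrow> E s t)"

definition visibility_graph :: "nat \<Rightarrow> 'a set \<Rightarrow> ('a \<Rightarrow> bar) \<Rightarrow> 'a \<Rightarrow> 'a \<Rightarrow> bool" where
  "visibility_graph k V B u v \<longleftrightarrow> u \<in> V \<and> v \<in> V \<and> u \<noteq> v \<and> k_sees k V B u v"

lemma bar_k_visibility_graph_iff:
  "bar_k_visibility_graph k V E \<longleftrightarrow> (\<exists>B. bar_rep V B \<and> E = visibility_graph k V B)"
  unfolding bar_k_visibility_graph_def visibility_graph_def by (simp add: fun_eq_iff)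

lemma bar_k_visibility_graph_visibility_graph:
  "bar_rep V B \<Longrightarrow> bar_k_visibility_graph k V (visibility_graph k V B)"
  using bar_k_visibility_graph_iff by blast

lemma bars_crossed_eq_card: "bars_crossed V B u v x = card (crossed_bars V B u v x)"
  by (simp add: bars_crossed_def crossed_bars_def)

lemma finite_crossed_bars: "finite V \<Longrightarrow> finite (crossed_bars V B u v x)"
  by (simp add: crossed_bars_def)

lemma bar_rep_finite: "bar_rep V B \<Longrightarrow> finite V"
  by (simp add: bar_rep_def)

lemma bar_rep_l_less_r: "bar_rep V B \<Longrightarrow> v \<in> V \<Longrightarrow> bar_l (B v) < bar_r (B v)"
  by (simp add: bar_rep_def)

lemma bar_rep_heights_differ:
  "\<lbrakk>bar_rep V B; u \<in> V; v \<in> V; u \<noteq> v; covers B u x; covers B v x\<rbrakk>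
   \<Longrightarrow> bar_y (B u) \<noteq> bar_y (B v)"
  unfolding bar_rep_def by force

lemma k_sees_sym: "k_sees k V B u v \<longleftrightarrow> k_sees k V B v u"
proof -
  have "bars_crossed V B u v x = bars_crossed V B v u x" for x
    unfolding bars_crossed_def by (simp add: insert_commute min.commute max.commute)
  thus ?thesis unfolding k_sees_def by metis
qed

lemma k_sees_common_point: "k_sees k V B u v \<Longrightarrow> \<exists>x. covers B u x \<and> covers B v x"
  unfolding k_sees_def by auto

lemma k_sees_if_crossed_subset:
  assumes "covers B u x" "covers B v x" "crossed_bars V B u v x \<subseteq> A" "finite A" "card A \<le> k"
  shows "k_sees k V B u v"
proof -
  have "bars_crossed V B u v x \<le> k"
    using card_mono[OF assms(4,3)] assms(5) by (simp add: bars_crossed_eq_card)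
  thus ?thesis using assms(1,2) unfolding k_sees_def by blast
qed

lemma not_k_sees_if_crossed_superset:
  assumes "finite V" "\<And>x. covers B u x \<Longrightarrow> covers B v x \<Longrightarrow> A \<subseteq> crossed_bars V B u v x"
    and "k < card A"
  shows "\<not> k_sees k V B u v"
proof
  assume "k_sees k V B u v"
  then obtain x where x: "covers B u x" "covers B v x" "bars_crossed V B u v x \<le> k"
    unfolding k_sees_def by blast
  have "card A \<le> card (crossed_bars V B u v x)"
    using card_mono[OF finite_crossed_bars[OF assms(1)] assms(2)[OF x(1,2)]] .
  with x(3) assms(3) show False by (simp add: bars_crossed_eq_card)
qed

lemma obtain_sorted_enumeration:
  fixes Y :: "'a \<Rightarrow> 'b::linorder"
  assumes "finite S" "inj_on Y S"
  obtains vs where "distinct vs" "set vs = S" "sorted_wrt (\<lambda>a b. Y a < Y b) vs"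
proof -
  obtain xs where xs: "set xs = S" "distinct xs" using finite_distinct_list[OF assms(1)] by blast
  define vs where "vs = sort_key Y xs"
  have "distinct vs" "set vs = S" using xs by (simp_all add: vs_def)
  moreover have "sorted_wrt (\<lambda>a b. Y a < Y b) vs"
    unfolding sorted_wrt_iff_nth_less
  proof (intro allI impI)
    fix a b assume ab: "a < b" "b < length vs"
    have "Y (vs ! a) \<le> Y (vs ! b)"
      using sorted_nth_mono[OF sorted_sort_key[of Y xs], of a b] ab by (simp add: vs_def)
    moreover have "vs ! a \<noteq> vs ! b" "vs ! a \<in> S" "vs ! b \<in> S"
      using ab \<open>distinct vs\<close> \<open>set vs = S\<close> by (auto simp: nth_eq_iff_index_eq)
    hence "Y (vs ! a) \<noteq> Y (vs ! b)" using assms(2) by (auto simp: inj_on_def)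
    ultimately show "Y (vs ! a) < Y (vs ! b)" by simp
  qed
  ultimately show ?thesis using that by blast
qed

lemma card_le_if_not_both:
  assumes "T \<subseteq> {a, b} \<union> S" "finite S" "\<not> (a \<in> T \<and> b \<in> T)"
  shows "card T \<le> card S + 1"
proof -
  obtain c where "T \<subseteq> insert c S" using assms(1,3) by blast
  hence "card T \<le> card (insert c S)" using assms(2) by (intro card_mono) auto
  also have "\<dots> \<le> card S + 1" by (simp add: card_insert_le_m1)
  finally show ?thesis .
qed

text \<open>The \<open>k + 1\<close> lowest of the crossed bars see each other at the same abscissa, since
  only bars among them lie in between.\<close>

lemma blocked_sight_contains_clique:
  assumes rep: "bar_rep V B" and uv: "u \<in> V" "v \<in> V" "u \<noteq> v"
    and blocked: "\<not> k_sees k V B u v" and cover: "covers B u x" "covers B v x"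
  shows "\<exists>T \<subseteq> V - {u, v}. card T = k + 1 \<and> clique (k_sees k V B) T"
proof -
  let ?Y = "\<lambda>w. bar_y (B w)"
  define S where "S = crossed_bars V B u v x"
  have "finite S" using bar_rep_finite[OF rep] by (simp add: S_def finite_crossed_bars)
  have "k < card S" using blocked cover unfolding k_sees_def by (force simp: S_def bars_crossed_eq_card)
  have "inj_on ?Y S"
    unfolding inj_on_def S_def crossed_bars_def using bar_rep_heights_differ[OF rep] by blast
  have strictly_between: "min (?Y u) (?Y v) < ?Y w \<and> ?Y w < max (?Y u) (?Y v)" if "w \<in> S" for w
    using that bar_rep_heights_differ[OF rep _ uv(1) _ _ cover(1)]
      bar_rep_heights_differ[OF rep _ uv(2) _ _ cover(2)]
    by (fastforce simp: S_def crossed_bars_def)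
  obtain vs where vs: "distinct vs" "set vs = S" "sorted_wrt (\<lambda>a b. ?Y a < ?Y b) vs"
    using obtain_sorted_enumeration[OF \<open>finite S\<close> \<open>inj_on ?Y S\<close>] .
  define T where "T = set (take (k + 1) vs)"
  have len: "k + 1 \<le> length vs" using \<open>k < card S\<close> distinct_card[OF vs(1)] vs(2) by simp
  have "card T = k + 1" unfolding T_def using vs(1) len by (simp add: distinct_card min_def)
  have "T \<subseteq> S" unfolding T_def using vs(2) set_take_subset by metis
  have "clique (k_sees k V B) T"
    unfolding clique_def
  proof (intro ballI impI)
    fix s t assume "s \<in> T" "t \<in> T" "s \<noteq> t"
    then obtain p q where pq: "p < k + 1" "s = vs ! p" "q < k + 1" "t = vs ! q"
      using len by (auto simp: T_def in_set_conv_nth)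
    have "s \<in> S" "t \<in> S" using \<open>s \<in> T\<close> \<open>t \<in> T\<close> \<open>T \<subseteq> S\<close> by auto
    have "crossed_bars V B s t x \<subseteq> T - {s}"
    proof
      fix w assume w: "w \<in> crossed_bars V B s t x"
      have "w \<in> S" using w strictly_between[OF \<open>s \<in> S\<close>] strictly_between[OF \<open>t \<in> S\<close>]
        unfolding crossed_bars_def S_def by auto
      then obtain r where r: "r < length vs" "w = vs ! r" using vs(2) by (metis in_set_conv_nth)
      have "r \<le> max p q"
      proof (rule ccontr)
        assume "\<not> r \<le> max p q"
        hence "?Y s < ?Y w" "?Y t < ?Y w"
          using sorted_wrt_nth_less[OF vs(3)] r pq by auto
        thus False using w by (auto simp: crossed_bars_def)
      qed
      hence "w \<in> T" unfolding T_def using r pq len by (auto simp: in_set_conv_nth intro!: exI[of _ r])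
      thus "w \<in> T - {s}" using w by (auto simp: crossed_bars_def)
    qed
    moreover have "card (T - {s}) \<le> k" using \<open>card T = k + 1\<close> \<open>s \<in> T\<close> by simp
    moreover have "covers B s x" "covers B t x"
      using \<open>s \<in> S\<close> \<open>t \<in> S\<close> by (auto simp: S_def crossed_bars_def)
    ultimately show "k_sees k V B s t"
      by (intro k_sees_if_crossed_subset[where A = "T - {s}"]) (auto simp: T_def)
  qed
  moreover have "S \<subseteq> V - {u, v}" by (auto simp: S_def crossed_bars_def)
  ultimately show ?thesis using \<open>card T = k + 1\<close> \<open>T \<subseteq> S\<close> by (intro exI[of _ T]) auto
qed

lemma nonadjacent_bars_disjoint:
  assumes rep: "bar_rep V B" and "p \<in> V" "q \<in> V" "p \<noteq> q"
    and nonadj: "\<not> visibility_graph k V B p q"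
    and small_cliques: "\<And>T. T \<subseteq> V - {p, q} \<Longrightarrow> clique (visibility_graph k V B) T \<Longrightarrow> card T \<le> k"
  shows "\<not> (covers B p x \<and> covers B q x)"
proof
  have "\<not> k_sees k V B p q" using nonadj assms(2-4) by (simp add: visibility_graph_def)
  moreover assume "covers B p x \<and> covers B q x"
  ultimately obtain T where T: "T \<subseteq> V - {p, q}" "card T = k + 1" "clique (k_sees k V B) T"
    using blocked_sight_contains_clique[OF rep assms(2-4), of k x] by (elim conjE) blast
  have "clique (visibility_graph k V B) T"
    using T(1,3) by (auto simp: clique_def visibility_graph_def)
  with small_cliques[OF T(1)] T(2) show False by simp
qed

text \<open>If the bars of \<open>a\<close> and \<open>c\<close> are disjoint intervals, each of \<open>b\<close> and \<open>d\<close> meets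
  both of them and so contains the gap between them; then \<open>b\<close> and \<open>d\<close> overlap.\<close>

lemma four_cycle_obstruction:
  assumes rep: "bar_rep V B" and E: "E = visibility_graph k V B"
    and cycle: "E a b" "E b c" "E c d" "E d a" "\<not> E a c" "\<not> E b d" "a \<noteq> c" "b \<noteq> d"
    and small_ac: "\<And>T. T \<subseteq> V - {a, c} \<Longrightarrow> clique E T \<Longrightarrow> card T \<le> k"
    and small_bd: "\<And>T. T \<subseteq> V - {b, d} \<Longrightarrow> clique E T \<Longrightarrow> card T \<le> k"
  shows False
proof -
  have V: "a \<in> V" "b \<in> V" "c \<in> V" "d \<in> V" using cycle(1,3) by (auto simp: E visibility_graph_def)
  have ac: "\<not> (covers B a x \<and> covers B c x)" for x
    using nonadjacent_bars_disjoint[OF rep V(1,3) cycle(7)] cycle(5) small_ac by (simp add: E)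
  have bd: "\<not> (covers B b x \<and> covers B d x)" for x
    using nonadjacent_bars_disjoint[OF rep V(2,4) cycle(8)] cycle(6) small_bd by (simp add: E)
  have meet: "\<exists>x. covers B u x \<and> covers B v x" if "E u v" for u v
    using that k_sees_common_point by (auto simp: E visibility_graph_def)
  obtain x1 where x1: "covers B a x1" "covers B b x1" using meet[OF cycle(1)] by blast
  obtain x2 where x2: "covers B b x2" "covers B c x2" using meet[OF cycle(2)] by blast
  obtain x3 where x3: "covers B c x3" "covers B d x3" using meet[OF cycle(3)] by blast
  obtain x4 where x4: "covers B d x4" "covers B a x4" using meet[OF cycle(4)] by blast
  have "bar_r (B a) < bar_l (B c) \<or> bar_r (B c) < bar_l (B a)"
    using ac[of "max (bar_l (B a)) (bar_l (B c))"] bar_rep_l_less_r[OF rep V(1)]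
      bar_rep_l_less_r[OF rep V(3)]
    by (cases "bar_l (B a) \<le> bar_l (B c)") (simp_all add: max_def)
  thus False
  proof
    assume "bar_r (B a) < bar_l (B c)"
    thus False using bd[of "bar_r (B a)"] x1 x2 x3 x4 by linarith
  next
    assume "bar_r (B c) < bar_l (B a)"
    thus False using bd[of "bar_r (B c)"] x1 x2 x3 x4 by linarith
  qed
qed

lemma pairwise_seeing_bars_common_point:
  assumes rep: "bar_rep V B" and "V \<noteq> {}"
    and sees: "\<And>u v. u \<in> V \<Longrightarrow> v \<in> V \<Longrightarrow> u \<noteq> v \<Longrightarrow> k_sees k V B u v"
  shows "\<exists>x0. \<forall>v\<in>V. covers B v x0"
proof -
  let ?L = "\<lambda>w. bar_l (B w)"
  have "finite V" using bar_rep_finite[OF rep] .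
  have "Max (?L ` V) \<in> ?L ` V" using \<open>finite V\<close> \<open>V \<noteq> {}\<close> by simp
  then obtain w0 where w0: "w0 \<in> V" "?L w0 = Max (?L ` V)" by auto
  have "covers B v (?L w0)" if v: "v \<in> V" for v
  proof (cases "v = w0")
    case True
    thus ?thesis using bar_rep_l_less_r[OF rep v] by simp
  next
    case False
    then obtain x where "covers B w0 x" "covers B v x"
      using k_sees_common_point[OF sees[OF w0(1) v]] by blast
    moreover have "?L v \<le> ?L w0" using w0(2) v \<open>finite V\<close> by simp
    ultimately show ?thesis by linarith
  qed
  thus ?thesis by blast
qed

text \<open>Pair the \<open>t\<close>-th bar from below with the \<open>(t + m)\<close>-th. If the sight lines of several
  pairs are all at one abscissa \<open>x\<close>, each of the other pairs puts a bar strictly between the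
  bars of pair \<open>t\<close>: its lower bar if it starts above \<open>t\<close>, its upper bar otherwise.\<close>

lemma nested_pairs_crossed:
  assumes "finite V" "set vs \<subseteq> V" "distinct vs"
    and sorted: "sorted_wrt (\<lambda>a b. bar_y (B a) < bar_y (B b)) vs"
    and len: "2 * m \<le> length vs" and A: "A \<subseteq> {..<m}" "t \<in> A"
    and cover: "\<And>s. s \<in> A \<Longrightarrow> covers B (vs ! s) x \<and> covers B (vs ! (s + m)) x"
  shows "card A - 1 \<le> bars_crossed V B (vs ! t) (vs ! (t + m)) x"
proof -
  let ?Y = "\<lambda>w. bar_y (B w)"
  define r where "r s = (if t < s then s else s + m)" for s
  have "t < m" using A by auto
  have r_between: "t < r s \<and> r s < t + m" if "s \<in> A - {t}" for s
    using that A by (auto simp: r_def)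
  have r_index: "r s < length vs" if "s \<in> A - {t}" for s
    using r_between[OF that] len \<open>t < m\<close> by linarith
  have inj: "inj_on (\<lambda>s. vs ! r s) (A - {t})"
  proof (rule inj_onI)
    fix s s' assume s: "s \<in> A - {t}" "s' \<in> A - {t}" "vs ! r s = vs ! r s'"
    hence "r s = r s'" using r_index \<open>distinct vs\<close> by (simp add: nth_eq_iff_index_eq)
    thus "s = s'" using s(1,2) A by (auto simp: r_def split: if_splits)
  qed
  have "(\<lambda>s. vs ! r s) ` (A - {t}) \<subseteq> crossed_bars V B (vs ! t) (vs ! (t + m)) x"
  proof (rule image_subsetI)
    fix s assume s: "s \<in> A - {t}"
    have "r s < length vs" using r_index[OF s] .
    hence "?Y (vs ! t) < ?Y (vs ! r s)" "?Y (vs ! r s) < ?Y (vs ! (t + m))"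
      using sorted_wrt_nth_less[OF sorted] r_between[OF s] len \<open>t < m\<close> by auto
    moreover have "vs ! r s \<in> V" using \<open>r s < length vs\<close> \<open>set vs \<subseteq> V\<close> nth_mem by blast
    moreover have "covers B (vs ! r s) x" using cover s by (simp add: r_def)
    ultimately show "vs ! r s \<in> crossed_bars V B (vs ! t) (vs ! (t + m)) x"
      by (auto simp: crossed_bars_def)
  qed
  hence "card (A - {t}) \<le> bars_crossed V B (vs ! t) (vs ! (t + m)) x"
    using card_inj_on_le[OF inj] finite_crossed_bars[OF \<open>finite V\<close>] by (simp add: bars_crossed_eq_card)
  thus ?thesis using A by simp
qed

text \<open>The sight line of the pair whose abscissa is closest to \<open>x0\<close> is crossed by all other
  pairs, as every bar involved covers both \<open>x0\<close> and its own pair's sight line.\<close>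

lemma nested_pairs_one_side:
  assumes "finite V" "set vs \<subseteq> V" "distinct vs"
    and sorted: "sorted_wrt (\<lambda>a b. bar_y (B a) < bar_y (B b)) vs"
    and len: "2 * m \<le> length vs" and A: "A \<subseteq> {..<m}" "A \<noteq> {}"
    and sight: "\<And>s. s \<in> A \<Longrightarrow> covers B (vs ! s) (X s) \<and> covers B (vs ! (s + m)) (X s)
                                \<and> bars_crossed V B (vs ! s) (vs ! (s + m)) (X s) \<le> k"
    and common: "\<And>s. s \<in> A \<Longrightarrow> covers B (vs ! s) x0 \<and> covers B (vs ! (s + m)) x0"
    and one_side: "(\<forall>s\<in>A. x0 \<le> X s) \<or> (\<forall>s\<in>A. X s \<le> x0)"
  shows "card A \<le> k + 1"
proof -
  have "finite A" using A(1) finite_subset by blast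
  obtain t where t: "t \<in> A" and closest: "\<And>s. s \<in> A \<Longrightarrow> min x0 (X s) \<le> X t \<and> X t \<le> max x0 (X s)"
  proof (cases "\<forall>s\<in>A. x0 \<le> X s")
    case True
    have "Min (X ` A) \<in> X ` A" using \<open>finite A\<close> A(2) by simp
    then obtain t where "t \<in> A" "X t = Min (X ` A)" by auto
    thus thesis using that[of t] True \<open>finite A\<close> by force
  next
    case False
    hence "\<forall>s\<in>A. X s \<le> x0" using one_side by blast
    have "Max (X ` A) \<in> X ` A" using \<open>finite A\<close> A(2) by simp
    then obtain t where "t \<in> A" "X t = Max (X ` A)" by auto
    thus thesis using that[of t] \<open>\<forall>s\<in>A. X s \<le> x0\<close> \<open>finite A\<close> by force
  qed
  have "covers B (vs ! s) (X t) \<and> covers B (vs ! (s + m)) (X t)" if "s \<in> A" for s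
    using sight[OF that] common[OF that] closest[OF that] by (simp add: min_def max_def split: if_splits)
  hence "card A - 1 \<le> bars_crossed V B (vs ! t) (vs ! (t + m)) (X t)"
    by (intro nested_pairs_crossed[OF assms(1-5) A(1) t])
  with sight[OF t] show ?thesis by linarith
qed

lemma complete_bar_visibility_card_bound:
  assumes rep: "bar_rep V B"
    and sees: "\<And>u v. u \<in> V \<Longrightarrow> v \<in> V \<Longrightarrow> u \<noteq> v \<Longrightarrow> k_sees k V B u v"
  shows "card V < 4 * k + 6"
proof (rule ccontr)
  define m where "m = 2 * k + 3"
  assume "\<not> card V < 4 * k + 6"
  hence "2 * m \<le> card V" "V \<noteq> {}" by (auto simp: m_def)
  have "finite V" using bar_rep_finite[OF rep] .
  obtain x0 where x0: "\<forall>v\<in>V. covers B v x0"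
    using pairwise_seeing_bars_common_point[OF rep \<open>V \<noteq> {}\<close> sees] by blast
  have "inj_on (\<lambda>w. bar_y (B w)) V"
    using bar_rep_heights_differ[OF rep] x0 by (meson inj_onI)
  then obtain vs where vs: "distinct vs" "set vs = V" "sorted_wrt (\<lambda>a b. bar_y (B a) < bar_y (B b)) vs"
    using obtain_sorted_enumeration[OF \<open>finite V\<close>] by blast
  have len: "2 * m \<le> length vs" using \<open>2 * m \<le> card V\<close> distinct_card[OF vs(1)] vs(2) by simp
  have pair_in_V: "vs ! s \<in> V \<and> vs ! (s + m) \<in> V" if "s < m" for s
    using that len vs(2) nth_mem by fastforce
  have "\<forall>s\<in>{..<m}. \<exists>x. covers B (vs ! s) x \<and> covers B (vs ! (s + m)) x
                        \<and> bars_crossed V B (vs ! s) (vs ! (s + m)) x \<le> k"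
  proof
    fix s assume "s \<in> {..<m}"
    moreover have "vs ! s \<noteq> vs ! (s + m)"
      using vs(1) len calculation by (simp add: nth_eq_iff_index_eq)
    ultimately show "\<exists>x. covers B (vs ! s) x \<and> covers B (vs ! (s + m)) x
                        \<and> bars_crossed V B (vs ! s) (vs ! (s + m)) x \<le> k"
      using sees pair_in_V unfolding k_sees_def by simp
  qed
  then obtain X where X: "\<forall>s\<in>{..<m}. covers B (vs ! s) (X s) \<and> covers B (vs ! (s + m)) (X s)
                        \<and> bars_crossed V B (vs ! s) (vs ! (s + m)) (X s) \<le> k"
    by (metis bchoice)
  have side_bound: "card A \<le> k + 1"
    if "A \<subseteq> {..<m}" "(\<forall>s\<in>A. x0 \<le> X s) \<or> (\<forall>s\<in>A. X s \<le> x0)" for A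
  proof (cases "A = {}")
    case False
    show ?thesis
    proof (rule nested_pairs_one_side[OF \<open>finite V\<close> _ vs(1,3) len that(1) False _ _ that(2)])
      show "set vs \<subseteq> V" using vs(2) by simp
    next
      fix s assume "s \<in> A"
      hence "s < m" using that(1) by auto
      thus "covers B (vs ! s) (X s) \<and> covers B (vs ! (s + m)) (X s)
              \<and> bars_crossed V B (vs ! s) (vs ! (s + m)) (X s) \<le> k"
        and "covers B (vs ! s) x0 \<and> covers B (vs ! (s + m)) x0"
        using X x0 pair_in_V by auto
    qed
  qed simp
  define R where "R = {s \<in> {..<m}. x0 \<le> X s}"
  define L where "L = {s \<in> {..<m}. X s < x0}"
  have "R \<union> L = {..<m}" "R \<inter> L = {}" by (auto simp: R_def L_def)
  hence "card R + card L = m" using card_Un_disjoint[of R L] by (simp add: R_def L_def)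
  moreover have "card R \<le> k + 1" by (rule side_bound) (auto simp: R_def)
  moreover have "card L \<le> k + 1" by (rule side_bound) (auto simp: L_def)
  ultimately show False by (simp add: m_def)
qed

text \<open>A 4-cycle \<open>0 - 1 - 2 - 3\<close>: the long bars 0 and 3 overlap the short bars 1 and 2 and each
  other, and the \<open>i\<close> short bars \<open>4, \<dots>, i + 3\<close>, stacked between 1 and 2 over \<open>[1, 2]\<close>, block
  exactly the diagonals \<open>0 - 2\<close> and \<open>1 - 3\<close>.\<close>

definition blocked_cycle_vertices :: "nat \<Rightarrow> nat set" where
  "blocked_cycle_vertices i = {..i + 3}"

definition blocked_cycle_bars :: "nat \<Rightarrow> nat \<Rightarrow> bar" where
  "blocked_cycle_bars i v =
     (if v = 0 then (0, 0, 4) else if v = 1 then (1, 0, 2) else if v = 2 then (real i + 2, 1, 2)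
      else if v = 3 then (real i + 3, 1, 4) else (real v - 2, 1, 2))"

lemma blocked_cycle_bars_simps:
  "bar_y (blocked_cycle_bars i 0) = 0" "bar_l (blocked_cycle_bars i 0) = 0"
  "bar_r (blocked_cycle_bars i 0) = 4"
  "bar_y (blocked_cycle_bars i 1) = 1" "bar_l (blocked_cycle_bars i 1) = 0"
  "bar_r (blocked_cycle_bars i 1) = 2"
  "bar_y (blocked_cycle_bars i (Suc 0)) = 1" "bar_l (blocked_cycle_bars i (Suc 0)) = 0"
  "bar_r (blocked_cycle_bars i (Suc 0)) = 2"
  "bar_y (blocked_cycle_bars i 2) = real i + 2" "bar_l (blocked_cycle_bars i 2) = 1"
  "bar_r (blocked_cycle_bars i 2) = 2"
  "bar_y (blocked_cycle_bars i 3) = real i + 3" "bar_l (blocked_cycle_bars i 3) = 1"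
  "bar_r (blocked_cycle_bars i 3) = 4"
  "4 \<le> v \<Longrightarrow> bar_y (blocked_cycle_bars i v) = real v - 2"
  "4 \<le> v \<Longrightarrow> bar_l (blocked_cycle_bars i v) = 1"
  "4 \<le> v \<Longrightarrow> bar_r (blocked_cycle_bars i v) = 2"
  by (auto simp: blocked_cycle_bars_def bar_y_def bar_l_def bar_r_def)

lemma bar_rep_blocked_cycle: "bar_rep (blocked_cycle_vertices i) (blocked_cycle_bars i)"
proof -
  have cases: "v = 0 \<or> v = 1 \<or> v = 2 \<or> v = 3 \<or> 4 \<le> v" for v :: nat by arith
  have "bar_l (blocked_cycle_bars i v) < bar_r (blocked_cycle_bars i v)" for v
    using cases[of v] by (auto simp: blocked_cycle_bars_simps)
  moreover have "bar_y (blocked_cycle_bars i u) \<noteq> bar_y (blocked_cycle_bars i v)"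
    if "u \<in> blocked_cycle_vertices i" "v \<in> blocked_cycle_vertices i" "u \<noteq> v" for u v
    using cases[of u] cases[of v] that by (auto simp: blocked_cycle_bars_simps blocked_cycle_vertices_def)
  ultimately show ?thesis by (auto simp: bar_rep_def blocked_cycle_vertices_def)
qed

lemma blocked_cycle_sees_if_unblocked:
  assumes "covers (blocked_cycle_bars i) u x" "covers (blocked_cycle_bars i) v x"
    and "\<forall>w\<in>{0, 1, 2, 3}. w \<notin> crossed_bars (blocked_cycle_vertices i) (blocked_cycle_bars i) u v x"
  shows "k_sees i (blocked_cycle_vertices i) (blocked_cycle_bars i) u v"
proof (rule k_sees_if_crossed_subset[where A = "{4..i + 3}"])
  show "crossed_bars (blocked_cycle_vertices i) (blocked_cycle_bars i) u v x \<subseteq> {4..i + 3}"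
  proof
    fix w assume w: "w \<in> crossed_bars (blocked_cycle_vertices i) (blocked_cycle_bars i) u v x"
    hence "w \<le> i + 3" by (simp add: crossed_bars_def blocked_cycle_vertices_def)
    moreover have "w \<notin> {0, 1, 2, 3}" using assms(3) w by blast
    ultimately show "w \<in> {4..i + 3}" by auto
  qed
qed (use assms(1,2) in auto)

lemma blocked_cycle_sees:
  "k_sees i (blocked_cycle_vertices i) (blocked_cycle_bars i) 0 1"
  "k_sees i (blocked_cycle_vertices i) (blocked_cycle_bars i) 1 2"
  "k_sees i (blocked_cycle_vertices i) (blocked_cycle_bars i) 2 3"
  "k_sees i (blocked_cycle_vertices i) (blocked_cycle_bars i) 3 0"
proof -
  note unblocked = blocked_cycle_sees_if_unblocked[simplified crossed_bars_def blocked_cycle_bars_simps]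
  show "k_sees i (blocked_cycle_vertices i) (blocked_cycle_bars i) 0 1"
    by (rule unblocked[where x = "1/2"]) (simp_all add: blocked_cycle_bars_simps)
  show "k_sees i (blocked_cycle_vertices i) (blocked_cycle_bars i) 1 2"
    by (rule unblocked[where x = "3/2"]) (simp_all add: blocked_cycle_bars_simps)
  show "k_sees i (blocked_cycle_vertices i) (blocked_cycle_bars i) 2 3"
    by (rule unblocked[where x = "3/2"]) (simp_all add: blocked_cycle_bars_simps)
  show "k_sees i (blocked_cycle_vertices i) (blocked_cycle_bars i) 3 0"
    by (rule unblocked[where x = 3]) (simp_all add: blocked_cycle_bars_simps)
qed

lemma blocked_cycle_diagonals_blocked:
  "\<not> k_sees i (blocked_cycle_vertices i) (blocked_cycle_bars i) 0 2"
  "\<not> k_sees i (blocked_cycle_vertices i) (blocked_cycle_bars i) 1 3"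
proof -
  show "\<not> k_sees i (blocked_cycle_vertices i) (blocked_cycle_bars i) 0 2"
    by (rule not_k_sees_if_crossed_superset[where A = "insert 1 {4..i + 3}"])
      (auto simp: crossed_bars_def blocked_cycle_bars_simps blocked_cycle_vertices_def)
  show "\<not> k_sees i (blocked_cycle_vertices i) (blocked_cycle_bars i) 1 3"
    by (rule not_k_sees_if_crossed_superset[where A = "insert 2 {4..i + 3}"])
      (auto simp: crossed_bars_def blocked_cycle_bars_simps blocked_cycle_vertices_def)
qed

definition blocked_cycle_graph :: "nat \<Rightarrow> nat \<Rightarrow> nat \<Rightarrow> bool" where
  "blocked_cycle_graph i = visibility_graph i (blocked_cycle_vertices i) (blocked_cycle_bars i)"

lemma blocked_cycle_graph_edges:
  "blocked_cycle_graph i 0 1" "blocked_cycle_graph i 1 2" "blocked_cycle_graph i 2 3"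
  "blocked_cycle_graph i 3 0" "\<not> blocked_cycle_graph i 0 2" "\<not> blocked_cycle_graph i 1 3"
  using blocked_cycle_sees blocked_cycle_diagonals_blocked
  by (simp_all add: blocked_cycle_graph_def visibility_graph_def blocked_cycle_vertices_def)

lemma blocked_cycle_clique_avoiding_diagonal:
  assumes "(p, q) \<in> {(0, 2), (1, 3)}" and T: "T \<subseteq> blocked_cycle_vertices i - {p, q}"
    and "clique (blocked_cycle_graph i) T"
  shows "card T \<le> i + 1"
proof -
  obtain a b where ab: "T \<subseteq> {a, b} \<union> {4..i + 3}" "\<not> blocked_cycle_graph i a b" "a \<noteq> b"
  proof (cases "(p, q) = (0, 2)")
    case True
    show thesis
      by (rule that[of 1 3]) (use T True blocked_cycle_graph_edges in \<open>auto simp: blocked_cycle_vertices_def\<close>)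
  next
    case False
    show thesis
      by (rule that[of 0 2]) (use T False assms(1) blocked_cycle_graph_edges in \<open>auto simp: blocked_cycle_vertices_def\<close>)
  qed
  hence "\<not> (a \<in> T \<and> b \<in> T)" using assms(3) by (auto simp: clique_def)
  with card_le_if_not_both[OF ab(1)] show ?thesis by simp
qed

lemma blocked_cycle_not_higher_visibility:
  assumes "i < j"
  shows "\<not> bar_k_visibility_graph j (blocked_cycle_vertices i) (blocked_cycle_graph i)"
proof
  assume "bar_k_visibility_graph j (blocked_cycle_vertices i) (blocked_cycle_graph i)"
  then obtain B where rep: "bar_rep (blocked_cycle_vertices i) B"
    and vis: "blocked_cycle_graph i = visibility_graph j (blocked_cycle_vertices i) B"
    unfolding bar_k_visibility_graph_iff by blast
  have small: "card T \<le> j" if "(p, q) \<in> {(0, 2), (1, 3)}"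
    "T \<subseteq> blocked_cycle_vertices i - {p, q}" "clique (blocked_cycle_graph i) T" for p q T
    using blocked_cycle_clique_avoiding_diagonal[OF that] assms by simp
  show False
    by (rule four_cycle_obstruction[OF rep vis blocked_cycle_graph_edges]) (use small in auto)
qed

text \<open>Four groups \<open>g = 0, \<dots>, 3\<close> of \<open>k + 1\<close> bars each, group \<open>g\<close> stacked at heights
  \<open>g (k + 1) + t\<close> for \<open>t \<le> k\<close>; every bar contains \<open>0\<close>. Measured in units of \<open>k + 1\<close>, the right
  ends of the groups \<open>2, 1, 0, 3\<close> and the left ends of the groups \<open>1, 3, 2, 0\<close> lie ever
  further out; within a group the left ends move outwards with height, and so do the right
  ends in groups 2 and 3, while in groups 0 and 1 they move inwards. Two bars
  of one group see each other at \<open>0\<close>; two bars of different groups see each other near an end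
  of one of them, where the only bars in between belong to a single group. Vertex \<open>4 t + g\<close>
  is the \<open>t\<close>-th bar of group \<open>g\<close>.\<close>

definition group_height :: "nat \<Rightarrow> nat \<Rightarrow> nat \<Rightarrow> real" where
  "group_height k g t = real g * (real k + 1) + real t"

definition group_right :: "nat \<Rightarrow> nat \<Rightarrow> nat \<Rightarrow> real" where
  "group_right k g t = (real k + 1) * (if g = 0 then 3 else if g = 1 then 2 else if g = 2 then 1 else 4)
     + (if g \<le> 1 then real k - real t else real t)"

definition group_left :: "nat \<Rightarrow> nat \<Rightarrow> nat \<Rightarrow> real" where
  "group_left k g t = - ((real k + 1) * (if g = 0 then 4 else if g = 1 then 1 else if g = 2 then 3 else 2)
     + real t)"

definition complete_vertices :: "nat \<Rightarrow> nat set" where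
  "complete_vertices k = {..<4 * (k + 1)}"

definition complete_bars :: "nat \<Rightarrow> nat \<Rightarrow> bar" where
  "complete_bars k v =
     (group_height k (v mod 4) (v div 4), group_left k (v mod 4) (v div 4), group_right k (v mod 4) (v div 4))"

lemma complete_bars_simps:
  assumes "g < 4"
  shows "bar_y (complete_bars k (4 * t + g)) = group_height k g t"
    "bar_l (complete_bars k (4 * t + g)) = group_left k g t"
    "bar_r (complete_bars k (4 * t + g)) = group_right k g t"
  using assms by (auto simp: complete_bars_def bar_y_def bar_l_def bar_r_def)

lemma complete_vertices_iff:
  "v \<in> complete_vertices k \<longleftrightarrow> (\<exists>t g. v = 4 * t + g \<and> g < 4 \<and> t \<le> k)"
proof
  assume "v \<in> complete_vertices k"
  hence "v = 4 * (v div 4) + v mod 4" "v mod 4 < 4" "v div 4 \<le> k" by (auto simp: complete_vertices_def)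
  thus "\<exists>t g. v = 4 * t + g \<and> g < 4 \<and> t \<le> k" by blast
qed (auto simp: complete_vertices_def)

lemma less_4_cases: "(g::nat) < 4 \<Longrightarrow> g = 0 \<or> g = 1 \<or> g = 2 \<or> g = 3"
  by arith

lemma group_bars_contain_0: "g < 4 \<Longrightarrow> t \<le> k \<Longrightarrow> group_left k g t < 0 \<and> 0 < group_right k g t"
  using less_4_cases[of g] by (auto simp: group_left_def group_right_def)

lemma bar_rep_complete: "bar_rep (complete_vertices k) (complete_bars k)"
proof -
  have "bar_l (complete_bars k v) < bar_r (complete_bars k v)" if "v \<in> complete_vertices k" for v
    using that group_bars_contain_0 by (force simp: complete_vertices_iff complete_bars_simps)
  moreover have "bar_y (complete_bars k u) \<noteq> bar_y (complete_bars k v)"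
    if uv: "u \<in> complete_vertices k" "v \<in> complete_vertices k" "u \<noteq> v" for u v
  proof -
    obtain tu gu where u: "u = 4 * tu + gu" "gu < 4" "tu \<le> k" using uv(1) complete_vertices_iff by blast
    obtain tv gv where v: "v = 4 * tv + gv" "gv < 4" "tv \<le> k" using uv(2) complete_vertices_iff by blast
    have "group_height k gu tu \<noteq> group_height k gv tv"
      using less_4_cases[OF u(2)] less_4_cases[OF v(2)] u v uv(3) by (auto simp: group_height_def)
    thus ?thesis using u v by (simp add: complete_bars_simps)
  qed
  ultimately show ?thesis unfolding bar_rep_def by (auto simp: complete_vertices_def)
qed

lemma complete_sees_if_crossed_within_group:
  fixes x :: real
  assumes u: "gu < 4" "tu \<le> k" and v: "gv < 4" "tv \<le> k"
    and lt: "group_height k gu tu < group_height k gv tv"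
    and cover: "group_left k gu tu \<le> x" "x \<le> group_right k gu tu"
      "group_left k gv tv \<le> x" "x \<le> group_right k gv tv"
    and crossed: "\<And>tw gw. gw \<in> {0, 1, 2, 3} \<Longrightarrow> tw \<le> k \<Longrightarrow> (gw = gu \<longrightarrow> tw \<noteq> tu) \<Longrightarrow> (gw = gv \<longrightarrow> tw \<noteq> tv)
       \<Longrightarrow> group_left k gw tw \<le> x \<Longrightarrow> x \<le> group_right k gw tw
       \<Longrightarrow> group_height k gu tu \<le> group_height k gw tw \<Longrightarrow> group_height k gw tw \<le> group_height k gv tv
       \<Longrightarrow> gw = g \<and> lo \<le> tw \<and> tw < hi"
    and range: "hi \<le> lo + k"
  shows "k_sees k (complete_vertices k) (complete_bars k) (4 * tu + gu) (4 * tv + gv)"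
proof (rule k_sees_if_crossed_subset[where x = x and A = "(\<lambda>s. 4 * s + g) ` {lo..<hi}"])
  show "covers (complete_bars k) (4 * tu + gu) x" "covers (complete_bars k) (4 * tv + gv) x"
    using u v cover by (simp_all add: complete_bars_simps)
  show "crossed_bars (complete_vertices k) (complete_bars k) (4 * tu + gu) (4 * tv + gv) x
        \<subseteq> (\<lambda>s. 4 * s + g) ` {lo..<hi}"
  proof
    fix w assume w: "w \<in> crossed_bars (complete_vertices k) (complete_bars k) (4 * tu + gu) (4 * tv + gv) x"
    then obtain tw gw where wd: "w = 4 * tw + gw" "gw < 4" "tw \<le> k"
      unfolding crossed_bars_def using complete_vertices_iff by blast
    have "gw = g \<and> lo \<le> tw \<and> tw < hi"
    proof (rule crossed)
      show "gw \<in> {0, 1, 2, 3}" using less_4_cases[OF wd(2)] by simp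
      show "gw = gu \<longrightarrow> tw \<noteq> tu" "gw = gv \<longrightarrow> tw \<noteq> tv" using w wd by (auto simp: crossed_bars_def)
      show "group_left k gw tw \<le> x" "x \<le> group_right k gw tw"
        using w wd by (auto simp: crossed_bars_def complete_bars_simps)
      show "group_height k gu tu \<le> group_height k gw tw" "group_height k gw tw \<le> group_height k gv tv"
        using w wd u v lt by (auto simp: crossed_bars_def complete_bars_simps)
    qed (use wd in simp)
    thus "w \<in> (\<lambda>s. 4 * s + g) ` {lo..<hi}" using wd by auto
  qed
  have "card ((\<lambda>s. 4 * s + g) ` {lo..<hi}) \<le> card {lo..<hi}" by (rule card_image_le) simp
  thus "card ((\<lambda>s. 4 * s + g) ` {lo..<hi}) \<le> k" using range by simp
qed simp

lemma complete_sees_within_group: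
  assumes "g < 4" "tu < tv" "tv \<le> k"
  shows "k_sees k (complete_vertices k) (complete_bars k) (4 * tu + g) (4 * tv + g)"
  using less_4_cases[OF assms(1)] assms
  by (intro complete_sees_if_crossed_within_group[where x = 0 and g = g and lo = "tu + 1" and hi = tv])
    (auto simp: group_height_def group_left_def group_right_def)

lemma complete_sees_across_groups:
  assumes "tu \<le> k" "tv \<le> k" "gu < gv" "gv < 4"
  shows "k_sees k (complete_vertices k) (complete_bars k) (4 * tu + gu) (4 * tv + gv)"
proof -
  note sees = complete_sees_if_crossed_within_group[where tu = tu and tv = tv and k = k]
  from assms(3,4) consider
    "gu = 0" "gv = 1" | "gu = 0" "gv = 2" | "gu = 0" "gv = 3" | "gu = 1" "gv = 2" | "gu = 1" "gv = 3"
    | "gu = 2" "gv = 3"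
    by arith
  then show ?thesis
  proof cases
    case 1
    with assms show ?thesis
      by (intro sees[where x = "group_left k 1 tv" and g = 0 and lo = "tu + 1" and hi = "k + 1"])
        (auto simp: group_height_def group_left_def group_right_def)
  next
    case 2
    with assms show ?thesis
      by (intro sees[where x = "group_left k 2 tv" and g = 0 and lo = "tu + 1" and hi = "k + 1"])
        (auto simp: group_height_def group_left_def group_right_def)
  next
    case 3
    with assms show ?thesis
      by (intro sees[where x = "group_right k 0 tu" and g = 3 and lo = 0 and hi = tv])
        (auto simp: group_height_def group_left_def group_right_def)
  next
    case 4
    with assms show ?thesis
      by (intro sees[where x = "group_right k 2 tv" and g = 1 and lo = "tu + 1" and hi = "k + 1"])
        (auto simp: group_height_def group_left_def group_right_def)
  next
    case 5
    with assms show ?thesis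
      by (intro sees[where x = "group_right k 1 tu" and g = 3 and lo = 0 and hi = tv])
        (auto simp: group_height_def group_left_def group_right_def)
  next
    case 6
    with assms show ?thesis
      by (intro sees[where x = "group_left k 3 tv" and g = 2 and lo = "tu + 1" and hi = "k + 1"])
        (auto simp: group_height_def group_left_def group_right_def)
  qed
qed

lemma complete_sees:
  assumes "u \<in> complete_vertices k" "v \<in> complete_vertices k" "u \<noteq> v"
  shows "k_sees k (complete_vertices k) (complete_bars k) u v"
proof -
  have ordered: "k_sees k (complete_vertices k) (complete_bars k) (4 * t + g) (4 * t' + g')"
    if "t \<le> k" "t' \<le> k" "g' < 4" "g < g' \<or> g = g' \<and> t < t'" for t g t' g'
    using that complete_sees_within_group complete_sees_across_groups by auto
  obtain t g where u: "u = 4 * t + g" "g < 4" "t \<le> k" using assms(1) complete_vertices_iff by blast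
  obtain t' g' where v: "v = 4 * t' + g'" "g' < 4" "t' \<le> k" using assms(2) complete_vertices_iff by blast
  consider "g < g' \<or> g = g' \<and> t < t'" | "g' < g \<or> g' = g \<and> t' < t"
    using u v assms(3) by fastforce
  then show ?thesis
  proof cases
    case 1
    then show ?thesis using ordered[OF u(3) v(3) v(2)] u(1) v(1) by simp
  next
    case 2
    then show ?thesis using ordered[OF v(3) u(3) u(2)] u(1) v(1) k_sees_sym by metis
  qed
qed

definition complete_graph :: "'a set \<Rightarrow> 'a \<Rightarrow> 'a \<Rightarrow> bool" where
  "complete_graph V u v \<longleftrightarrow> u \<in> V \<and> v \<in> V \<and> u \<noteq> v"

lemma complete_graph_bar_visibility:
  "bar_k_visibility_graph k (complete_vertices k) (complete_graph (complete_vertices k))"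
  unfolding bar_k_visibility_graph_def complete_graph_def
  using bar_rep_complete complete_sees by blast

lemma complete_graph_not_lower_visibility:
  assumes "i < j"
  shows "\<not> bar_k_visibility_graph i (complete_vertices j) (complete_graph (complete_vertices j))"
proof
  assume "bar_k_visibility_graph i (complete_vertices j) (complete_graph (complete_vertices j))"
  then obtain B where "bar_rep (complete_vertices j) B"
    "\<And>u v. u \<in> complete_vertices j \<Longrightarrow> v \<in> complete_vertices j \<Longrightarrow> u \<noteq> v
      \<Longrightarrow> k_sees i (complete_vertices j) B u v"
    unfolding bar_k_visibility_graph_def complete_graph_def by blast
  hence "card (complete_vertices j) < 4 * i + 6" by (rule complete_bar_visibility_card_bound)
  with assms show False by (simp add: complete_vertices_def)
qed

lemma bar_visibility_classes_differ:
  assumes "i < j"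
  shows "\<exists>(V :: nat set) E. bar_k_visibility_graph i V E \<and> \<not> bar_k_visibility_graph j V E"
    and "\<exists>(V :: nat set) E. bar_k_visibility_graph j V E \<and> \<not> bar_k_visibility_graph i V E"
  using bar_k_visibility_graph_visibility_graph[OF bar_rep_blocked_cycle]
    blocked_cycle_not_higher_visibility[OF assms] complete_graph_bar_visibility
    complete_graph_not_lower_visibility[OF assms]
  unfolding blocked_cycle_graph_def by blast+

theorem mainTheorem13:
  fixes i j :: nat
  assumes "i \<noteq> j"
  shows "(\<exists>(V :: nat set) E. bar_k_visibility_graph i V E \<and> \<not> bar_k_visibility_graph j V E) \<and>
         (\<exists>(V :: nat set) E. bar_k_visibility_graph j V E \<and> \<not> bar_k_visibility_graph i V E)"
proof (cases "i < j")
  case True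
  then show ?thesis using bar_visibility_classes_differ by blast
next
  case False
  with assms have "j < i" by simp
  then show ?thesis using bar_visibility_classes_differ by blast
qed

end
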